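(* Let $K$ be a finite simplicial complex equipped with two assignments of edge lengths, giving discrete geodesic distance functions $f^1_p$ and $f^2_p$ for each vertex $p$ of $K$, and let $\epsilon=\max_{p\in\mathrm{Vert}(K)}\max_{q\in\mathrm{Vert}(K)}|f^1_p(q)-f^2_p(q)|$. Then for every homology class $h\in H_d(K;\mathbb{Z}_2)$, $|S^1(h)-S^2(h)|\le\epsilon$, where $S^1,S^2$ denote the size of $h$ computed with respect to $f^1$ and $f^2$ respectively.
   Context: For a given edge-length assignment, $f_p(q)$ is the length of a shortest path from vertex $p$ to vertex $q$ in the 1-skeleton of $K$, extended to simplices by $f_p(\sigma)=\max_{q\in\mathrm{Vert}(\sigma)}f_p(q)$. The geodesic ball $B_p^t=\{\sigma\in K: f_p(\sigma)\le t\}$ is a subcomplex; it carries a class $h$ if it contains some cycle representing $h$ (over $\mathbb{Z}_2$). $r_{f_p}(h)$ is the smallest $t$ such that $B_p^t$ carries $h$, and the size of $h$ is $S(h)=\min_{p\in\mathrm{Vert}(K)}r_{f_p}(h)$. *)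

theory Defs
  imports Main "HOL-Library.Multiset" Complex_Main
begin

definition simplicial_complex :: "'a set set \<Rightarrow> bool" where
  "simplicial_complex K \<longleftrightarrow> finite K \<and>
     (\<forall>\<sigma>\<in>K. finite \<sigma> \<and> \<sigma> \<noteq> {} \<and> (\<forall>\<tau>. \<tau> \<subseteq> \<sigma> \<and> \<tau> \<noteq> {} \<longrightarrow> \<tau> \<in> K))"

definition Vert :: "'a set set \<Rightarrow> 'a set" where
  "Vert K = \<Union>K"

definition simplices :: "'a set set \<Rightarrow> nat \<Rightarrow> 'a set set" where
  "simplices K d = {\<sigma>\<in>K. card \<sigma> = Suc d}"

text \<open>A Z/2 d-chain is a set of d-simplices; addition is symmetric difference.\<close>

definition chains :: "'a set set \<Rightarrow> nat \<Rightarrow> 'a set set set" where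
  "chains K d = Pow (simplices K d)"

definition sym_diff :: "'b set \<Rightarrow> 'b set \<Rightarrow> 'b set" where
  "sym_diff A B = (A - B) \<union> (B - A)"

text \<open>Boundary of a d-chain: the codimension-one faces occurring an odd number of
times (empty for d = 0, since the empty set is not a simplex).\<close>
definition bdry :: "'a set set \<Rightarrow> nat \<Rightarrow> 'a set set \<Rightarrow> 'a set set" where
  "bdry K d c = {\<tau>\<in>K. card \<tau> = d \<and> odd (card {\<sigma>\<in>c. \<tau> \<subseteq> \<sigma>})}"

definition cycles :: "'a set set \<Rightarrow> nat \<Rightarrow> 'a set set set" where
  "cycles K d = {c\<in>chains K d. bdry K d c = {}}"

definition boundaries :: "'a set set \<Rightarrow> nat \<Rightarrow> 'a set set set" where
  "boundaries K d = bdry K (Suc d) ` chains K (Suc d)"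

definition hclass :: "'a set set \<Rightarrow> nat \<Rightarrow> 'a set set \<Rightarrow> 'a set set set" where
  "hclass K d z = {z'\<in>cycles K d. sym_diff z z' \<in> boundaries K d}"

definition homology :: "'a set set \<Rightarrow> nat \<Rightarrow> 'a set set set set" where
  "homology K d = hclass K d ` cycles K d"

definition walk :: "'a set set \<Rightarrow> 'a list \<Rightarrow> bool" where
  "walk K xs \<longleftrightarrow> xs \<noteq> [] \<and> set xs \<subseteq> Vert K \<and>
     (\<forall>i. Suc i < length xs \<longrightarrow> {xs ! i, xs ! Suc i} \<in> simplices K 1)"

definition walk_len :: "('a set \<Rightarrow> real) \<Rightarrow> 'a list \<Rightarrow> real" where
  "walk_len w xs = (\<Sum>i<length xs - 1. w {xs ! i, xs ! Suc i})"

definition edge_lengths :: "'a set set \<Rightarrow> ('a set \<Rightarrow> real) \<Rightarrow> bool" where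
  "edge_lengths K w \<longleftrightarrow> (\<forall>e\<in>simplices K 1. 0 \<le> w e)"

definition connected_1skel :: "'a set set \<Rightarrow> bool" where
  "connected_1skel K \<longleftrightarrow> (\<forall>p\<in>Vert K. \<forall>q\<in>Vert K. \<exists>xs. walk K xs \<and> hd xs = p \<and> last xs = q)"

definition geod :: "'a set set \<Rightarrow> ('a set \<Rightarrow> real) \<Rightarrow> 'a \<Rightarrow> 'a \<Rightarrow> real" where
  "geod K w p q = Inf {walk_len w xs | xs. walk K xs \<and> hd xs = p \<and> last xs = q}"

definition geod_simplex :: "'a set set \<Rightarrow> ('a set \<Rightarrow> real) \<Rightarrow> 'a \<Rightarrow> 'a set \<Rightarrow> real" where
  "geod_simplex K w p \<sigma> = Max (geod K w p ` \<sigma>)"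

definition geod_ball :: "'a set set \<Rightarrow> ('a set \<Rightarrow> real) \<Rightarrow> 'a \<Rightarrow> real \<Rightarrow> 'a set set" where
  "geod_ball K w p t = {\<sigma>\<in>K. geod_simplex K w p \<sigma> \<le> t}"

definition carries :: "'a set set \<Rightarrow> 'a set set set \<Rightarrow> bool" where
  "carries B h \<longleftrightarrow> (\<exists>c\<in>h. c \<subseteq> B)"

definition radius :: "'a set set \<Rightarrow> ('a set \<Rightarrow> real) \<Rightarrow> 'a \<Rightarrow> 'a set set set \<Rightarrow> real" where
  "radius K w p h = Inf {t. 0 \<le> t \<and> carries (geod_ball K w p t) h}"

definition hsize :: "'a set set \<Rightarrow> ('a set \<Rightarrow> real) \<Rightarrow> 'a set set set \<Rightarrow> real" where
  "hsize K w h = Min ((\<lambda>p. radius K w p h) ` Vert K)"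

definition dist_eps :: "'a set set \<Rightarrow> ('a set \<Rightarrow> real) \<Rightarrow> ('a set \<Rightarrow> real) \<Rightarrow> real" where
  "dist_eps K w1 w2 = Max ((\<lambda>p. Max ((\<lambda>q. \<bar>geod K w1 p q - geod K w2 p q\<bar>) ` Vert K)) ` Vert K)"

end

theory Submission
  imports Defs
begin

text \<open>If every vertex distance moves by at most \<open>\<epsilon>\<close> when passing from one edge-length
assignment to the other, then every geodesic ball of radius \<open>t\<close> for one assignment lies
in the ball of radius \<open>t + \<epsilon>\<close> for the other. Hence each radius \<open>r_{f_p}(h)\<close>, an infimum
of the carrying radii, moves by at most \<open>\<epsilon>\<close>, and so does their minimum over \<open>p\<close>.\<close>

lemma cInf_le_cInf_add:
  fixes S T :: "real set"
  assumes "T \<noteq> {}" and "bdd_below S" and "\<And>t. t \<in> T \<Longrightarrow> t + e \<in> S"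
  shows "Inf S \<le> Inf T + e"
proof -
  have "Inf S - e \<le> t" if "t \<in> T" for t
    using cInf_lower[OF assms(3)[OF that] assms(2)] by simp
  hence "Inf S - e \<le> Inf T" using assms(1) by (intro cInf_greatest)
  thus ?thesis by simp
qed

lemma Min_image_le_Min_image_add:
  fixes f g :: "'b \<Rightarrow> real"
  assumes "finite A" and "A \<noteq> {}" and "\<And>x. x \<in> A \<Longrightarrow> f x \<le> g x + e"
  shows "Min (f ` A) \<le> Min (g ` A) + e"
proof -
  have "Min (g ` A) \<in> g ` A" using assms(1,2) by simp
  then obtain x where x: "x \<in> A" and gx: "Min (g ` A) = g x" by blast
  have "Min (f ` A) \<le> f x" using assms(1) x by simp
  also have "\<dots> \<le> g x + e" using assms(3) x by simp
  finally show ?thesis using gx by simp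
qed

lemma finite_Vert: "simplicial_complex K \<Longrightarrow> finite (Vert K)"
  by (auto simp: simplicial_complex_def Vert_def)

lemma Vert_nonempty: "simplicial_complex K \<Longrightarrow> K \<noteq> {} \<Longrightarrow> Vert K \<noteq> {}"
  by (auto simp: simplicial_complex_def Vert_def)

lemma geod_simplex_le_iff:
  assumes "simplicial_complex K" and "\<sigma> \<in> K"
  shows "geod_simplex K w p \<sigma> \<le> t \<longleftrightarrow> (\<forall>q\<in>\<sigma>. geod K w p q \<le> t)"
  using assms by (simp add: geod_simplex_def simplicial_complex_def Max_le_iff)

lemma geod_ball_subset_geod_ball_add:
  assumes "simplicial_complex K"
    and "\<And>q. q \<in> Vert K \<Longrightarrow> geod K w1 p q \<le> geod K w2 p q + e"
  shows "geod_ball K w2 p t \<subseteq> geod_ball K w1 p (t + e)"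
proof
  fix \<sigma> assume "\<sigma> \<in> geod_ball K w2 p t"
  hence \<sigma>: "\<sigma> \<in> K" and "\<forall>q\<in>\<sigma>. geod K w2 p q \<le> t"
    using geod_simplex_le_iff[OF assms(1)] by (auto simp: geod_ball_def)
  moreover have "\<sigma> \<subseteq> Vert K" using \<sigma> by (auto simp: Vert_def)
  ultimately have "\<forall>q\<in>\<sigma>. geod K w1 p q \<le> t + e" using assms(2) by force
  thus "\<sigma> \<in> geod_ball K w1 p (t + e)"
    using \<sigma> geod_simplex_le_iff[OF assms(1) \<sigma>] by (simp add: geod_ball_def)
qed

lemma carries_mono: "B \<subseteq> B' \<Longrightarrow> carries B h \<Longrightarrow> carries B' h"
  by (auto simp: carries_def)

lemma cycle_in_hclass:
  assumes "z \<in> cycles K d"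
  shows "z \<in> hclass K d z"
proof -
  have "sym_diff z z = bdry K (Suc d) {}" by (simp add: sym_diff_def bdry_def)
  hence "sym_diff z z \<in> boundaries K d"
    unfolding boundaries_def chains_def by blast
  thus ?thesis using assms by (simp add: hclass_def)
qed

lemma carries_complex_homology:
  assumes "h \<in> homology K d"
  shows "carries K h"
proof -
  obtain z where z: "z \<in> cycles K d" and h: "h = hclass K d z"
    using assms by (auto simp: homology_def)
  have "z \<subseteq> K" using z by (auto simp: cycles_def chains_def simplices_def)
  thus ?thesis using cycle_in_hclass[OF z] h by (auto simp: carries_def)
qed

lemma geod_ball_Max_eq:
  assumes "simplicial_complex K"
  shows "geod_ball K w p (Max (geod_simplex K w p ` K)) = K"
proof -
  have "finite K" using assms by (simp add: simplicial_complex_def)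
  thus ?thesis by (auto simp: geod_ball_def)
qed

lemma ex_radius_carries:
  assumes "simplicial_complex K" and "h \<in> homology K d"
  shows "\<exists>t\<ge>0. carries (geod_ball K w p t) h"
proof -
  let ?T = "max 0 (Max (geod_simplex K w p ` K))"
  have "geod_ball K w p (Max (geod_simplex K w p ` K)) \<subseteq> geod_ball K w p ?T"
    by (auto simp: geod_ball_def)
  hence "carries (geod_ball K w p ?T) h"
    using carries_complex_homology[OF assms(2)] geod_ball_Max_eq[OF assms(1)]
    by (metis carries_mono)
  thus ?thesis by (intro exI[of _ ?T]) simp
qed

lemma radius_le_radius_add:
  assumes "simplicial_complex K" and "h \<in> homology K d" and "0 \<le> e"
    and "\<And>q. q \<in> Vert K \<Longrightarrow> geod K w1 p q \<le> geod K w2 p q + e"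
  shows "radius K w1 p h \<le> radius K w2 p h + e"
  unfolding radius_def
proof (rule cInf_le_cInf_add)
  show "{t. 0 \<le> t \<and> carries (geod_ball K w2 p t) h} \<noteq> {}"
    using ex_radius_carries[OF assms(1,2)] by blast
  show "bdd_below {t. 0 \<le> t \<and> carries (geod_ball K w1 p t) h}"
    by (rule bdd_belowI[of _ 0]) simp
  fix t assume "t \<in> {t. 0 \<le> t \<and> carries (geod_ball K w2 p t) h}"
  thus "t + e \<in> {t. 0 \<le> t \<and> carries (geod_ball K w1 p t) h}"
    using assms(3) carries_mono[OF geod_ball_subset_geod_ball_add[OF assms(1,4)]] by auto
qed

lemma hsize_le_hsize_add:
  assumes "simplicial_complex K" and "K \<noteq> {}" and "h \<in> homology K d" and "0 \<le> e"
    and "\<And>p q. p \<in> Vert K \<Longrightarrow> q \<in> Vert K \<Longrightarrow> geod K w1 p q \<le> geod K w2 p q + e"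
  shows "hsize K w1 h \<le> hsize K w2 h + e"
  unfolding hsize_def
proof (rule Min_image_le_Min_image_add)
  show "finite (Vert K)" "Vert K \<noteq> {}"
    using finite_Vert[OF assms(1)] Vert_nonempty[OF assms(1,2)] .
  fix p assume "p \<in> Vert K"
  thus "radius K w1 p h \<le> radius K w2 p h + e"
    using assms(5) by (intro radius_le_radius_add[OF assms(1,3,4)])
qed

lemma geod_diff_le_dist_eps:
  assumes "simplicial_complex K" and "p \<in> Vert K" and "q \<in> Vert K"
  shows "\<bar>geod K w1 p q - geod K w2 p q\<bar> \<le> dist_eps K w1 w2"
proof -
  have fin: "finite (Vert K)" using finite_Vert[OF assms(1)] .
  have "\<bar>geod K w1 p q - geod K w2 p q\<bar> \<le> Max ((\<lambda>q. \<bar>geod K w1 p q - geod K w2 p q\<bar>) ` Vert K)"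
    using fin assms(3) by simp
  also have "\<dots> \<le> dist_eps K w1 w2" unfolding dist_eps_def using fin assms(2) by simp
  finally show ?thesis .
qed

theorem theorem3p1:
  fixes K :: "'a set set" and w1 w2 :: "'a set \<Rightarrow> real" and d :: nat
    and h :: "'a set set set"
  assumes "simplicial_complex K" and "K \<noteq> {}"
    and "connected_1skel K"
    and "edge_lengths K w1" and "edge_lengths K w2"
    and "h \<in> homology K d"
  shows "\<bar>hsize K w1 h - hsize K w2 h\<bar> \<le> dist_eps K w1 w2"
proof -
  let ?\<epsilon> = "dist_eps K w1 w2"
  have bound: "\<bar>geod K w1 p q - geod K w2 p q\<bar> \<le> ?\<epsilon>" if "p \<in> Vert K" "q \<in> Vert K" for p q
    using geod_diff_le_dist_eps[OF assms(1) that] .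
  obtain p where "p \<in> Vert K" using Vert_nonempty[OF assms(1,2)] by blast
  hence nonneg: "0 \<le> ?\<epsilon>" using bound by fastforce
  have "hsize K w1 h \<le> hsize K w2 h + ?\<epsilon>"
    using bound by (intro hsize_le_hsize_add[OF assms(1,2,6) nonneg]) fastforce
  moreover have "hsize K w2 h \<le> hsize K w1 h + ?\<epsilon>"
    using bound by (intro hsize_le_hsize_add[OF assms(1,2,6) nonneg]) fastforce
  ultimately show ?thesis by linarith
qed

end
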